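(* Let $M$ be a compact manifold, $D\subset M$ open, $B\subset M$ open with $\overline B\subset D$, and let $h_1,h_2,\dots$ be maps each sending $\overline D$ into $D$ and being a contraction of rate $\beta<1$ on $\overline D$. Assume $B\subset\bigcup_{i=1}^\infty h_i(B)$. Then for every $x\in B$ there is a sequence $(i_j)_{j\ge1}$ of positive integers such that $x=\lim_{n\to\infty}h_{i_1}\circ\dots\circ h_{i_n}(y)$ for all $y\in B$. *)

theory Defs
  imports "HOL-Analysis.Analysis"
begin

fun comp_seq :: "(nat \<Rightarrow> 'a \<Rightarrow> 'a) \<Rightarrow> (nat \<Rightarrow> nat) \<Rightarrow> nat \<Rightarrow> 'a \<Rightarrow> 'a" where
  "comp_seq h s 0 = id"
| "comp_seq h s (Suc n) = comp_seq h s n \<circ> h (s (Suc n))"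

end

theory Submission
  imports Defs
begin

lemma comp_seq_dist_le:
  fixes h :: "nat \<Rightarrow> 'a::metric_space \<Rightarrow> 'a"
  assumes maps_to: "\<And>i. i \<ge> 1 \<Longrightarrow> h i ` C \<subseteq> C"
    and contr: "\<And>i x y. i \<ge> 1 \<Longrightarrow> x \<in> C \<Longrightarrow> y \<in> C \<Longrightarrow> dist (h i x) (h i y) \<le> q * dist x y"
    and "q \<ge> 0" and s: "\<forall>j\<ge>1. s j \<ge> 1"
    and "u \<in> C" "v \<in> C"
  shows "dist (comp_seq h s n u) (comp_seq h s n v) \<le> q ^ n * dist u v"
  using \<open>u \<in> C\<close> \<open>v \<in> C\<close>
proof (induction n arbitrary: u v)
  case 0
  then show ?case by simp
next
  case (Suc n)
  let ?i = "s (Suc n)"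
  have "?i \<ge> 1" using s by simp
  then have "h ?i u \<in> C" "h ?i v \<in> C" using maps_to Suc.prems by auto
  then have "dist (comp_seq h s (Suc n) u) (comp_seq h s (Suc n) v) \<le> q ^ n * dist (h ?i u) (h ?i v)"
    using Suc.IH by simp
  also have "\<dots> \<le> q ^ n * (q * dist u v)"
    using contr[OF \<open>?i \<ge> 1\<close> Suc.prems] \<open>q \<ge> 0\<close> by (simp add: mult_left_mono)
  finally show ?case by (simp add: algebra_simps)
qed

lemma comp_seq_tendsto_of_contraction:
  fixes h :: "nat \<Rightarrow> 'a::metric_space \<Rightarrow> 'a"
  assumes "bounded C"
    and maps_to: "\<And>i. i \<ge> 1 \<Longrightarrow> h i ` C \<subseteq> C"
    and contr: "\<And>i x y. i \<ge> 1 \<Longrightarrow> x \<in> C \<Longrightarrow> y \<in> C \<Longrightarrow> dist (h i x) (h i y) \<le> \<beta> * dist x y"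
    and "\<beta> < 1" and s: "\<forall>j\<ge>1. s j \<ge> 1"
    and preimages: "\<And>n. xs n \<in> C" "\<And>n. comp_seq h s n (xs n) = x"
    and "y \<in> C"
  shows "(\<lambda>n. comp_seq h s n y) \<longlonglongrightarrow> x"
proof -
  define q where "q = max \<beta> 0"
  have "q \<ge> 0" "q < 1" using \<open>\<beta> < 1\<close> by (auto simp: q_def)
  have contr_q: "dist (h i u) (h i v) \<le> q * dist u v" if "i \<ge> 1" "u \<in> C" "v \<in> C" for i u v
    using contr[OF that] by (smt (verit) q_def mult_right_mono zero_le_dist)
  obtain c e where center: "\<And>z. z \<in> C \<Longrightarrow> dist c z \<le> e"
    using \<open>bounded C\<close> unfolding bounded_def by blast
  have diam: "dist u v \<le> 2 * e" if "u \<in> C" "v \<in> C" for u v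
    using dist_triangle3[of u v c] center[OF that(1)] center[OF that(2)] by linarith
  have bound: "norm (dist (comp_seq h s n y) x) \<le> q ^ n * (2 * e)" for n
  proof -
    have "dist (comp_seq h s n y) x = dist (comp_seq h s n y) (comp_seq h s n (xs n))"
      by (simp add: preimages)
    also have "\<dots> \<le> q ^ n * dist y (xs n)"
      using comp_seq_dist_le[OF maps_to contr_q \<open>q \<ge> 0\<close> s \<open>y \<in> C\<close> preimages(1)] .
    also have "\<dots> \<le> q ^ n * (2 * e)"
      using diam[OF \<open>y \<in> C\<close> preimages(1)] \<open>q \<ge> 0\<close> by (simp add: mult_left_mono)
    finally show ?thesis by simp
  qed
  have "(\<lambda>n. q ^ n * (2 * e)) \<longlonglongrightarrow> 0"
    using \<open>q \<ge> 0\<close> \<open>q < 1\<close> by (intro tendsto_mult_left_zero LIMSEQ_power_zero) simp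
  then have "(\<lambda>n. dist (comp_seq h s n y) x) \<longlonglongrightarrow> 0"
    by (rule Lim_null_comparison[OF always_eventually, OF allI, OF bound])
  then show ?thesis by (rule tendsto_dist_iff[THEN iffD2])
qed

lemma exists_comp_seq_preimages:
  fixes h :: "nat \<Rightarrow> 'a \<Rightarrow> 'a"
  assumes "B \<subseteq> (\<Union>i\<in>{1..}. h i ` B)" and "x \<in> B"
  obtains s xs where "\<forall>j\<ge>1. s j \<ge> 1" "\<And>n. xs n \<in> B" "\<And>n. comp_seq h s n (xs n) = x"
proof -
  have "\<forall>z\<in>B. \<exists>i w. i \<ge> 1 \<and> w \<in> B \<and> h i w = z" using assms(1) by fastforce
  then obtain g p where gp: "\<And>z. z \<in> B \<Longrightarrow> g z \<ge> 1 \<and> p z \<in> B \<and> h (g z) (p z) = z"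
    by metis
  define xs where "xs = rec_nat x (\<lambda>_. p)"
  have xs_Suc: "xs (Suc n) = p (xs n)" for n by (simp add: xs_def)
  have xs_B: "xs n \<in> B" for n
    by (induction n) (use \<open>x \<in> B\<close> gp in \<open>auto simp: xs_def\<close>)
  define s where "s j = (if j = 0 then 1 else g (xs (j - 1)))" for j
  have s_ge_1: "\<forall>j\<ge>1. s j \<ge> 1" using gp xs_B by (auto simp: s_def)
  have comp_seq_xs: "comp_seq h s n (xs n) = x" for n
  proof (induction n)
    case 0
    then show ?case by (simp add: xs_def)
  next
    case (Suc n)
    have "h (s (Suc n)) (xs (Suc n)) = xs n" using gp[OF xs_B[of n]] by (simp add: s_def xs_Suc)
    then show ?case using Suc by simp
  qed
  show thesis by (rule that[OF s_ge_1 xs_B comp_seq_xs])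
qed

theorem lemma3p7:
  fixes h :: "nat \<Rightarrow> 'a::metric_space \<Rightarrow> 'a"
    and D B :: "'a set" and \<beta> :: real
  assumes "compact (UNIV :: 'a set)"
    and "open D" and "open B" and "closure B \<subseteq> D"
    and "\<beta> < 1"
    and "\<And>i. i \<ge> 1 \<Longrightarrow> h i ` closure D \<subseteq> D"
    and "\<And>i x y. i \<ge> 1 \<Longrightarrow> x \<in> closure D \<Longrightarrow> y \<in> closure D \<Longrightarrow>
           dist (h i x) (h i y) \<le> \<beta> * dist x y"
    and "B \<subseteq> (\<Union>i\<in>{1..}. h i ` B)"
  shows "\<forall>x\<in>B. \<exists>s :: nat \<Rightarrow> nat. (\<forall>j\<ge>1. s j \<ge> 1) \<and>
           (\<forall>y\<in>B. (\<lambda>n. comp_seq h s n y) \<longlonglongrightarrow> x)"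
proof
  fix x assume "x \<in> B"
  then obtain s xs where s: "\<forall>j\<ge>1. s j \<ge> 1" and xs: "\<And>n. xs n \<in> B" "\<And>n. comp_seq h s n (xs n) = x"
    using exists_comp_seq_preimages[OF assms(8)] by blast
  have B_sub: "B \<subseteq> closure D" using assms(4) closure_subset by blast
  have bounded: "bounded (closure D)"
    using compact_imp_bounded[OF assms(1)] bounded_subset by blast
  have maps_to: "h i ` closure D \<subseteq> closure D" if "i \<ge> 1" for i
    using assms(6)[OF that] closure_subset by blast
  have "(\<lambda>n. comp_seq h s n y) \<longlonglongrightarrow> x" if "y \<in> B" for y
    using comp_seq_tendsto_of_contraction[OF bounded maps_to assms(7) assms(5) s
        xs(1)[THEN subsetD[OF B_sub]] xs(2) that[THEN subsetD[OF B_sub]]] .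
  then show "\<exists>s. (\<forall>j\<ge>1. s j \<ge> 1) \<and> (\<forall>y\<in>B. (\<lambda>n. comp_seq h s n y) \<longlonglongrightarrow> x)"
    using s by blast
qed

end
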